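(* If $\mathfrak a$ is a nonzero $\mathfrak q\times\mathfrak q$-stable ideal of $A$, then $\mathfrak a+\mathfrak m=A$.
   Context: Fix $\zeta\in\mathbb{C}$ with $\zeta^2=-1$. Let $\mathbf{V}=\mathbb{C}^{\infty|\infty}$ with even basis $\{e_i\}$, odd basis $\{f_i\}$, odd involution $\alpha(e_i)=f_i,\alpha(f_i)=e_i$; $\mathfrak q$ is the infinite queer Lie superalgebra of finitary matrices $\begin{pmatrix} a & b\\ -b & a\end{pmatrix}$ acting on $\mathbf V$. $\mathbf U$ is the $\zeta$-eigenspace of $\alpha\otimes\alpha$ on $\mathbf V\otimes\mathbf V$ (Koszul signs), with basis $v_{i,j}=(1+\zeta)e_i\otimes e_j+(1-\zeta)f_i\otimes f_j$, $w_{i,j}=(1+\zeta)e_i\otimes f_j+(1-\zeta)f_i\otimes e_j$; $A=\mathrm{Sym}(\mathbf U)$ is the polynomial superalgebra in even $x_{i,j}$ and odd $y_{i,j}$ corresponding to them, with $\mathfrak q\times\mathfrak q$ acting by superderivations. $\mathfrak m$ is the ideal of $A$ generated by all $x_{i,j}-\delta_{i,j}$ and $y_{i,j}$. *)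

theory Defs
  imports Complex_Main "HOL-Library.Poly_Mapping" "HOL-Library.FSet" "HOL-Library.Product_Lexorder"
begin

text \<open>A monomial is a pair (m, S):
  m : exponents of the even variables x_(i,j) (finitely supported), S : the finite set of
  odd variables y_(i,j) occurring. The basis element (m,S) stands for
  x^m * y_(s1) * ... * y_(sk), where s1 < ... < sk is S listed in the lexicographic order
  of nat * nat.\<close>

type_synonym idx = "nat \<times> nat"
type_synonym mono = "(idx \<Rightarrow>\<^sub>0 nat) \<times> idx fset"
type_synonym A = "mono \<Rightarrow>\<^sub>0 complex"

definition inv_count :: "idx fset \<Rightarrow> idx fset \<Rightarrow> nat" where
  "inv_count S T = card {(s, t). s |\<in>| S \<and> t |\<in>| T \<and> t < s}"

definition mono_sign :: "mono \<Rightarrow> mono \<Rightarrow> complex" where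
  "mono_sign M N = (if snd M |\<inter>| snd N = {||} then (-1) ^ inv_count (snd M) (snd N) else 0)"

definition mono_mul :: "mono \<Rightarrow> mono \<Rightarrow> mono" where
  "mono_mul M N = (fst M + fst N, snd M |\<union>| snd N)"

definition amul :: "A \<Rightarrow> A \<Rightarrow> A" where
  "amul f g = (\<Sum>(M, N) \<in> Poly_Mapping.keys f \<times> Poly_Mapping.keys g.
      Poly_Mapping.single (mono_mul M N) (Poly_Mapping.lookup f M * Poly_Mapping.lookup g N * mono_sign M N))"

definition aone :: A where "aone = Poly_Mapping.single (0, {||}) 1"

definition xvar :: "idx \<Rightarrow> A" where "xvar ij = Poly_Mapping.single (Poly_Mapping.single ij 1, {||}) 1"
definition yvar :: "idx \<Rightarrow> A" where "yvar ij = Poly_Mapping.single (0, {|ij|}) 1"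

definition smul :: "complex \<Rightarrow> A \<Rightarrow> A" where "smul c f = Poly_Mapping.map (\<lambda>v. c * v) f"

definition monoA :: "mono \<Rightarrow> A" where "monoA M = Poly_Mapping.single M 1"

definition is_ideal :: "A set \<Rightarrow> bool" where
  "is_ideal I \<longleftrightarrow> 0 \<in> I \<and> (\<forall>f\<in>I. \<forall>g\<in>I. f + g \<in> I) \<and>
     (\<forall>r f. f \<in> I \<longrightarrow> amul r f \<in> I \<and> amul f r \<in> I)"

definition ideal_gen :: "A set \<Rightarrow> A set" where
  "ideal_gen G = \<Inter>{I. is_ideal I \<and> G \<subseteq> I}"

definition m_ideal :: "A set" where
  "m_ideal = ideal_gen ({xvar (i, j) - (if i = j then aone else 0) | i j. True} \<union> range yvar)"

text \<open>An element of q is a pair (a,b) of finitary matrices, representing the block matrix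
  [[a, b], [-b, a]] on V with respect to the basis (e_i) then (f_i).  Basis vectors of V
  are (P,i) with P = False for e_i and P = True for f_i.\<close>

type_synonym qelt = "(idx \<Rightarrow>\<^sub>0 complex) \<times> (idx \<Rightarrow>\<^sub>0 complex)"

text \<open>Coefficient of basis vector (R,i) in X applied to basis vector (P,k).\<close>
definition matq :: "qelt \<Rightarrow> bool \<times> nat \<Rightarrow> bool \<times> nat \<Rightarrow> complex" where
  "matq X Ri Pk = (let (a, b) = X; (R, i) = Ri; (P, k) = Pk in
     if R = P then Poly_Mapping.lookup a (i, k) else if P then Poly_Mapping.lookup b (i, k) else - Poly_Mapping.lookup b (i, k))"

text \<open>For (X,Y) in q x q homogeneous of parity p (True = odd): coefficient of
  (R,i) (x) (S,j) in (X,Y).((P,k) (x) (Q,l)) = X(P,k) (x) (Q,l) + (-1)^(p |P|) (P,k) (x) Y(Q,l).\<close>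
definition tcoef :: "bool \<Rightarrow> qelt \<Rightarrow> qelt \<Rightarrow> (bool \<times> nat \<times> bool \<times> nat) \<Rightarrow> (bool \<times> nat \<times> bool \<times> nat) \<Rightarrow> complex" where
  "tcoef p X Y src tgt = (let (P, k, Q, l) = src; (R, i, S, j) = tgt in
     (if S = Q \<and> j = l then matq X (R, i) (P, k) else 0) +
     (if R = P \<and> i = k then (if p \<and> P then -1 else 1) * matq Y (S, j) (Q, l) else 0))"


text \<open>zeta is a fixed complex number with zeta^2 = -1 (passed as a parameter).
  Coefficients of (X,Y).v_(k,l) and (X,Y).w_(k,l) in V (x) V.\<close>
definition vimg :: "complex \<Rightarrow> bool \<Rightarrow> qelt \<Rightarrow> qelt \<Rightarrow> idx \<Rightarrow> (bool \<times> nat \<times> bool \<times> nat) \<Rightarrow> complex" where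
  "vimg zeta p X Y kl t = (1 + zeta) * tcoef p X Y (False, fst kl, False, snd kl) t
                   + (1 - zeta) * tcoef p X Y (True, fst kl, True, snd kl) t"
definition wimg :: "complex \<Rightarrow> bool \<Rightarrow> qelt \<Rightarrow> qelt \<Rightarrow> idx \<Rightarrow> (bool \<times> nat \<times> bool \<times> nat) \<Rightarrow> complex" where
  "wimg zeta p X Y kl t = (1 + zeta) * tcoef p X Y (False, fst kl, True, snd kl) t
                   + (1 - zeta) * tcoef p X Y (True, fst kl, False, snd kl) t"

text \<open>An element t of U = sum c_ij v_ij + d_ij w_ij has e_i(x)e_j-coefficient (1+zeta) c_ij and
  e_i(x)f_j-coefficient (1+zeta) d_ij; convert to the corresponding element sum c x + d y of A.\<close>
definition U_to_A :: "complex \<Rightarrow> ((bool \<times> nat \<times> bool \<times> nat) \<Rightarrow> complex) \<Rightarrow> A" where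
  "U_to_A zeta t = (let c = (\<lambda>(i,j). t (False, i, False, j) / (1 + zeta));
                   d = (\<lambda>(i,j). t (False, i, True, j) / (1 + zeta)) in
     (\<Sum>ij \<in> {ij. c ij \<noteq> 0 \<or> d ij \<noteq> 0}.
        smul (c ij) (xvar ij) + smul (d ij) (yvar ij)))"

text \<open>Superderivation of parity p on A determined by images gx, gy of the generators
  x_ij, y_ij, applied to the basis monomial x^m y_(s1) ... y_(sk).\<close>
definition der_mono :: "bool \<Rightarrow> (idx \<Rightarrow> A) \<Rightarrow> (idx \<Rightarrow> A) \<Rightarrow> mono \<Rightarrow> A" where
  "der_mono p gx gy M = (let (m, S) = M; s = sorted_list_of_fset S in
     (\<Sum>v \<in> Poly_Mapping.keys m. smul (of_nat (Poly_Mapping.lookup m v))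
         (amul (monoA (m - Poly_Mapping.single v 1, {||})) (amul (gx v) (monoA (0, S))))) +
     (\<Sum>l < length s. smul (if p then (-1) ^ l else 1)
         (amul (monoA (m, fset_of_list (take l s)))
               (amul (gy (s ! l)) (monoA (0, fset_of_list (drop (Suc l) s)))))))"

definition der :: "bool \<Rightarrow> (idx \<Rightarrow> A) \<Rightarrow> (idx \<Rightarrow> A) \<Rightarrow> A \<Rightarrow> A" where
  "der p gx gy f = (\<Sum>M \<in> Poly_Mapping.keys f. smul (Poly_Mapping.lookup f M) (der_mono p gx gy M))"

definition act_hom :: "complex \<Rightarrow> bool \<Rightarrow> qelt \<Rightarrow> qelt \<Rightarrow> A \<Rightarrow> A" where
  "act_hom zeta p X Y = der p (\<lambda>kl. U_to_A zeta (vimg zeta p X Y kl)) (\<lambda>kl. U_to_A zeta (wimg zeta p X Y kl))"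

definition act :: "complex \<Rightarrow> qelt \<times> qelt \<Rightarrow> A \<Rightarrow> A" where
  "act zeta g f = (let ((a, b), (a', b')) = g in
     act_hom zeta False (a, 0) (a', 0) f + act_hom zeta True (0, b) (0, b') f)"

definition qq_stable :: "complex \<Rightarrow> A set \<Rightarrow> bool" where
  "qq_stable zeta I \<longleftrightarrow> (\<forall>g. \<forall>f \<in> I. act zeta g f \<in> I)"

end

(* The quotient A/m is C, via evaluation at the base point x_ij = delta_ij, y_ij = 0, so it
   suffices to find an element of the ideal that does not vanish there.  Suppose all elements of a
   q x q-stable subspace I vanish at the base point.  The elementary matrices of q act by the even
   derivation x_kj -> x_lj, y_kj -> y_lj and the odd derivation x_kj -> c y_lj, y_kj -> c x_lj with
   c = (1 - zeta) / (1 + zeta).  Evaluating a derivative of order n of such a derivation of h at the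
   base point gives (a nonzero multiple of) a derivative of h of order n + 1, plus derivatives of h
   of order at most n.  By induction on the order, all derivatives of all elements of I vanish at
   the base point; as these functionals are triangular on the monomial basis, I = 0. *)

theory Submission
  imports Defs
begin

lemma lookup_smul [simp]: "Poly_Mapping.lookup (smul c f) M = c * Poly_Mapping.lookup f M"
  by (simp add: smul_def Poly_Mapping.map.rep_eq when_def)

lemma smul_sum: "smul c (sum F X) = (\<Sum>x\<in>X. smul c (F x))"
  by (rule poly_mapping_eqI) (simp add: lookup_sum sum_distrib_left)

lemma smul_single [simp]: "smul c (Poly_Mapping.single M a) = Poly_Mapping.single M (c * a)"
  by (rule poly_mapping_eqI) (simp add: lookup_single when_def)

lemma smul_zero [simp]: "smul 0 f = 0"
  by (rule poly_mapping_eqI) simp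

lemma smul_zero_right [simp]: "smul c 0 = 0"
  by (rule poly_mapping_eqI) simp

lemma smul_smul [simp]: "smul c (smul d f) = smul (c * d) f"
  by (rule poly_mapping_eqI) simp

lemma smul_one [simp]: "smul 1 f = f"
  by (rule poly_mapping_eqI) simp

lemma smul_minus_one: "smul (-1) f = - f"
  by (rule poly_mapping_eqI) simp

lemma keys_smul_subset: "Poly_Mapping.keys (smul c f) \<subseteq> Poly_Mapping.keys f"
  by (simp add: in_keys_iff subset_iff)

lemma sum_single_lookup:
  "finite K \<Longrightarrow> Poly_Mapping.keys f \<subseteq> K \<Longrightarrow> (\<Sum>M\<in>K. Poly_Mapping.single M (Poly_Mapping.lookup f M)) = f"
  by (rule poly_mapping_eqI) (auto simp: lookup_sum lookup_single when_def in_keys_iff)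

definition lin_ext :: "(mono \<Rightarrow> complex) \<Rightarrow> A \<Rightarrow> complex" where
  "lin_ext w f = (\<Sum>M\<in>Poly_Mapping.keys f. Poly_Mapping.lookup f M * w M)"

lemma lin_ext_superset:
  "finite K \<Longrightarrow> Poly_Mapping.keys f \<subseteq> K \<Longrightarrow> lin_ext w f = (\<Sum>M\<in>K. Poly_Mapping.lookup f M * w M)"
  unfolding lin_ext_def by (rule sum.mono_neutral_left) (auto simp: in_keys_iff)

lemma lin_ext_add [simp]: "lin_ext w (f + g) = lin_ext w f + lin_ext w g"
proof -
  let ?K = "Poly_Mapping.keys f \<union> Poly_Mapping.keys g"
  have "lin_ext w (f + g) = (\<Sum>M\<in>?K. Poly_Mapping.lookup (f + g) M * w M)"
    using keys_add[of f g] by (intro lin_ext_superset) auto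
  also have "\<dots> = (\<Sum>M\<in>?K. Poly_Mapping.lookup f M * w M) + (\<Sum>M\<in>?K. Poly_Mapping.lookup g M * w M)"
    by (simp add: lookup_add algebra_simps sum.distrib)
  also have "\<dots> = lin_ext w f + lin_ext w g"
    by (simp add: lin_ext_superset[of ?K])
  finally show ?thesis .
qed

lemma lin_ext_zero [simp]: "lin_ext w 0 = 0"
  by (simp add: lin_ext_def)

lemma lin_ext_smul [simp]: "lin_ext w (smul c f) = c * lin_ext w f"
  using lin_ext_superset[OF finite_keys keys_smul_subset, of w c f]
  by (simp add: lin_ext_def sum_distrib_left algebra_simps)

lemma lin_ext_single [simp]: "lin_ext w (Poly_Mapping.single M c) = c * w M"
  by (simp add: lin_ext_def)

lemma lin_ext_sum: "lin_ext w (sum F X) = (\<Sum>x\<in>X. lin_ext w (F x))"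
  by (induction X rule: infinite_finite_induct) auto

lemma lin_ext_fun_add: "lin_ext (\<lambda>M. w1 M + w2 M) f = lin_ext w1 f + lin_ext w2 f"
  unfolding lin_ext_def by (simp add: distrib_left sum.distrib)

lemma lin_ext_fun_scale: "lin_ext (\<lambda>M. a * w M) f = a * lin_ext w f"
  unfolding lin_ext_def by (simp add: sum_distrib_left mult_ac)

lemma lin_ext_fun_sum: "lin_ext (\<lambda>M. \<Sum>j\<in>J. a j * W j M) f = (\<Sum>j\<in>J. a j * lin_ext (W j) f)"
  unfolding lin_ext_def by (simp add: sum_distrib_left sum.swap[of _ J] mult_ac)

lemma amul_superset:
  assumes "finite K1" "finite K2" "Poly_Mapping.keys f \<subseteq> K1" "Poly_Mapping.keys g \<subseteq> K2"
  shows "amul f g = (\<Sum>(M, N) \<in> K1 \<times> K2. Poly_Mapping.single (mono_mul M N)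
           (Poly_Mapping.lookup f M * Poly_Mapping.lookup g N * mono_sign M N))"
  unfolding amul_def using assms
  by (intro sum.mono_neutral_left) (auto simp: in_keys_iff)

lemma amul_zero [simp]: "amul 0 f = 0" "amul f 0 = 0"
  by (simp_all add: amul_def)

lemma amul_add_right: "amul h (f + g) = amul h f + amul h g"
proof -
  let ?K = "Poly_Mapping.keys f \<union> Poly_Mapping.keys g" and ?L = "Poly_Mapping.keys h"
  show ?thesis
    using keys_add[of f g]
    by (simp add: amul_superset[of ?L ?K] sum.distrib[symmetric] lookup_add distrib_right
        distrib_left single_add split_def)
qed

lemma amul_diff_right: "amul h (f - g) = amul h f - amul h g"
  using amul_add_right[of h "f - g" g] by simp

lemma amul_smul_left: "amul (smul c f) g = smul c (amul f g)"
  unfolding amul_superset[OF finite_keys finite_keys keys_smul_subset order_refl, of c f g]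
  by (simp add: amul_def smul_sum algebra_simps split_def)

lemma amul_smul_right: "amul f (smul c g) = smul c (amul f g)"
  unfolding amul_superset[OF finite_keys finite_keys order_refl keys_smul_subset, of f c g]
  by (simp add: amul_def smul_sum algebra_simps split_def)

lemma mono_sign_empty [simp]: "mono_sign M (m, {||}) = 1" "mono_sign (m, {||}) M = 1"
  by (auto simp: mono_sign_def inv_count_def)

lemma amul_one_right [simp]: "amul f aone = f"
proof -
  have "amul f aone = (\<Sum>M\<in>Poly_Mapping.keys f. Poly_Mapping.single M (Poly_Mapping.lookup f M))"
    unfolding aone_def
    by (subst amul_superset[of "Poly_Mapping.keys f" "{(0, {||})}"])
       (simp_all add: sum.cartesian_product[symmetric] mono_mul_def)
  then show ?thesis
    by (simp add: sum_single_lookup)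
qed

lemma amul_one_left [simp]: "amul aone f = f"
proof -
  have "amul aone f = (\<Sum>M\<in>Poly_Mapping.keys f. Poly_Mapping.single M (Poly_Mapping.lookup f M))"
    unfolding aone_def
    by (subst amul_superset[of "{(0, {||})}" "Poly_Mapping.keys f"])
       (simp_all add: sum.cartesian_product[symmetric] mono_mul_def)
  then show ?thesis
    by (simp add: sum_single_lookup)
qed

definition odd_sign :: "idx fset \<Rightarrow> idx fset \<Rightarrow> complex" where
  "odd_sign S T = (if S |\<inter>| T = {||} then (-1) ^ inv_count S T else 0)"

lemma odd_sign_empty [simp]: "odd_sign {||} T = 1" "odd_sign T {||} = 1"
  by (simp_all add: odd_sign_def inv_count_def)

lemma amul_single_pair:
  "amul (Poly_Mapping.single (m1, S1) a) (Poly_Mapping.single (m2, S2) b) =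
   Poly_Mapping.single (m1 + m2, S1 |\<union>| S2) (a * b * odd_sign S1 S2)"
  by (subst amul_superset[of "{(m1, S1)}" "{(m2, S2)}"]) (auto simp: mono_mul_def mono_sign_def odd_sign_def)

lemma is_ideal_ideal_gen: "is_ideal (ideal_gen G)"
  unfolding is_ideal_def
proof (intro conjI ballI allI impI)
  show "0 \<in> ideal_gen G"
    by (simp add: ideal_gen_def is_ideal_def)
  show "f + g \<in> ideal_gen G" if "f \<in> ideal_gen G" "g \<in> ideal_gen G" for f g
    using that by (simp add: ideal_gen_def is_ideal_def)
  show "amul r f \<in> ideal_gen G" "amul f r \<in> ideal_gen G" if "f \<in> ideal_gen G" for r f
    using that by (simp_all add: ideal_gen_def is_ideal_def)
qed

lemma ideal_gen_subset: "G \<subseteq> ideal_gen G"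
  unfolding ideal_gen_def by (rule Inter_greatest) simp

lemma ideal_zero: "is_ideal I \<Longrightarrow> 0 \<in> I"
  by (simp add: is_ideal_def)

lemma ideal_add: "is_ideal I \<Longrightarrow> f \<in> I \<Longrightarrow> g \<in> I \<Longrightarrow> f + g \<in> I"
  by (simp add: is_ideal_def)

lemma ideal_mul_left: "is_ideal I \<Longrightarrow> f \<in> I \<Longrightarrow> amul r f \<in> I"
  by (simp add: is_ideal_def)

lemma ideal_mul_right: "is_ideal I \<Longrightarrow> f \<in> I \<Longrightarrow> amul f r \<in> I"
  by (simp add: is_ideal_def)

lemma ideal_smul: "is_ideal I \<Longrightarrow> f \<in> I \<Longrightarrow> smul c f \<in> I"
  using ideal_mul_left[of I f "smul c aone"] by (simp add: amul_smul_left)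

lemma ideal_uminus: "is_ideal I \<Longrightarrow> f \<in> I \<Longrightarrow> - f \<in> I"
  using ideal_smul[of I f "-1"] by (simp add: smul_minus_one)

lemma ideal_sum: "is_ideal I \<Longrightarrow> (\<And>x. x \<in> X \<Longrightarrow> F x \<in> I) \<Longrightarrow> sum F X \<in> I"
  by (induction X rule: infinite_finite_induct) (simp_all add: ideal_zero ideal_add)

lemma is_ideal_m_ideal: "is_ideal m_ideal"
  unfolding m_ideal_def by (rule is_ideal_ideal_gen)

lemma yvar_in_m_ideal: "yvar t \<in> m_ideal"
  unfolding m_ideal_def by (rule subsetD[OF ideal_gen_subset]) simp

lemma xvar_in_m_ideal: "xvar (i, j) - (if i = j then aone else 0) \<in> m_ideal"
  unfolding m_ideal_def by (rule subsetD[OF ideal_gen_subset], rule UnI1) blast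

section \<open>Exponent vectors and evaluation at the base point\<close>

definition unit_exp :: "idx \<Rightarrow> idx \<Rightarrow>\<^sub>0 nat" where
  "unit_exp v = Poly_Mapping.single v 1"

lemma keys_unit_exp [simp]: "Poly_Mapping.keys (unit_exp v) = {v}"
  by (simp add: unit_exp_def)

lemma lookup_unit_exp: "Poly_Mapping.lookup (unit_exp w) v = (if w = v then 1 else 0)"
  by (simp add: unit_exp_def lookup_single)

lemma xvar_unit_exp: "xvar v = Poly_Mapping.single (unit_exp v, {||}) 1"
  by (simp add: xvar_def unit_exp_def)

lemma keys_add_unit_exp: "Poly_Mapping.keys (m + unit_exp v) = insert v (Poly_Mapping.keys m)"
  by (auto simp: in_keys_iff lookup_add lookup_unit_exp split: if_splits)

lemma minus_unit_exp_add_cancel: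
  "v \<in> Poly_Mapping.keys m \<Longrightarrow> m - unit_exp v + unit_exp v = m"
  by (rule poly_mapping_eqI) (auto simp: lookup_add lookup_minus lookup_unit_exp in_keys_iff)

definition total_deg :: "(idx \<Rightarrow>\<^sub>0 nat) \<Rightarrow> nat" where
  "total_deg m = (\<Sum>v\<in>Poly_Mapping.keys m. Poly_Mapping.lookup m v)"

lemma total_deg_superset:
  "finite K \<Longrightarrow> Poly_Mapping.keys m \<subseteq> K \<Longrightarrow> total_deg m = (\<Sum>v\<in>K. Poly_Mapping.lookup m v)"
  unfolding total_deg_def by (rule sum.mono_neutral_left) (auto simp: in_keys_iff)

lemma total_deg_zero_iff: "total_deg m = 0 \<longleftrightarrow> m = 0"
  by (auto simp: total_deg_def in_keys_iff intro!: poly_mapping_eqI)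

lemma total_deg_add_unit_exp: "total_deg (m + unit_exp v) = total_deg m + 1"
proof -
  let ?K = "insert v (Poly_Mapping.keys m)"
  have "total_deg m = (\<Sum>w\<in>?K. Poly_Mapping.lookup m w)"
    by (rule total_deg_superset) auto
  then show ?thesis
    by (simp add: total_deg_def keys_add_unit_exp lookup_add sum.distrib lookup_unit_exp)
qed

lemma total_deg_minus_unit_exp:
  "v \<in> Poly_Mapping.keys m \<Longrightarrow> total_deg (m - unit_exp v) + 1 = total_deg m"
  using total_deg_add_unit_exp[of "m - unit_exp v" v] by (simp add: minus_unit_exp_add_cancel)

text \<open>The value of a basis monomial at the point \<open>x\<^sub>i\<^sub>j = \<delta>\<^sub>i\<^sub>j\<close>, \<open>y\<^sub>i\<^sub>j = 0\<close>, where all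
  generators of \<open>m_ideal\<close> vanish.\<close>

definition eval_base :: "mono \<Rightarrow> complex" where
  "eval_base M = (if snd M = {||} \<and> (\<forall>v\<in>Poly_Mapping.keys (fst M). fst v = snd v) then 1 else 0)"

lemma inv_count_singleton_below:
  assumes "\<And>u. u |\<in>| S \<Longrightarrow> t < u"
  shows "inv_count {|t|} S = 0"
proof -
  have "{(s, u). s |\<in>| {|t|} \<and> u |\<in>| S \<and> u < s} = {}"
    using assms less_asym by fastforce
  then show ?thesis
    unfolding inv_count_def by (metis card.empty)
qed

lemma monoA_odd_in_m_ideal:
  assumes "S \<noteq> {||}"
  shows "monoA (m, S) \<in> m_ideal"
proof -
  define t where "t = fMin S"
  have tS: "t |\<in>| S"
    using assms unfolding t_def by (simp add: fMin_in)
  have "t < u" if "u |\<in>| S |-| {|t|}" for u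
    using that fMin_le[of u S] unfolding t_def by (metis fminusE fsingletonI order_le_neq_trans)
  then have "inv_count {|t|} (S |-| {|t|}) = 0"
    by (rule inv_count_singleton_below)
  then have "amul (yvar t) (monoA (m, S |-| {|t|})) = monoA (m, S)"
    using tS by (simp add: yvar_def monoA_def amul_single_pair odd_sign_def finsert_absorb)
  then show ?thesis
    using ideal_mul_right[OF is_ideal_m_ideal yvar_in_m_ideal] by metis
qed

lemma monoA_even_minus_eval_in_m_ideal:
  "monoA (m, {||}) - smul (eval_base (m, {||})) aone \<in> m_ideal"
proof (induction "total_deg m" arbitrary: m)
  case 0
  then show ?case
    by (simp add: total_deg_zero_iff monoA_def eval_base_def aone_def ideal_zero[OF is_ideal_m_ideal])
next
  case (Suc n m)
  then have "m \<noteq> 0"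
    by (metis nat.distinct(1) total_deg_zero_iff)
  then obtain i j where v: "(i, j) \<in> Poly_Mapping.keys m"
    by (metis all_not_in_conv keys_eq_empty prod.collapse)
  define m' where "m' = m - unit_exp (i, j)"
  have m: "m = m' + unit_exp (i, j)"
    unfolding m'_def using v by (simp add: minus_unit_exp_add_cancel)
  have IH: "monoA (m', {||}) - smul (eval_base (m', {||})) aone \<in> m_ideal"
    using Suc total_deg_minus_unit_exp[OF v] by (simp add: m'_def)
  define d where "d = (if i = j then 1 else (0::complex))"
  have eval: "eval_base (m, {||}) = eval_base (m', {||}) * d"
    unfolding m d_def eval_base_def by (simp add: keys_add_unit_exp)
  have prod: "amul (monoA (m', {||})) (xvar (i, j)) = monoA (m, {||})"
    by (simp add: monoA_def xvar_unit_exp amul_single_pair m)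
  have gen: "xvar (i, j) - smul d aone \<in> m_ideal"
    using xvar_in_m_ideal[of i j] unfolding d_def by (cases "i = j") auto
  have "monoA (m, {||}) - smul (eval_base (m, {||})) aone =
        amul (monoA (m', {||})) (xvar (i, j) - smul d aone)
        + smul d (monoA (m', {||}) - smul (eval_base (m', {||})) aone)"
    unfolding eval prod[symmetric] amul_diff_right amul_smul_right amul_one_right
    by (rule poly_mapping_eqI) (simp add: lookup_add lookup_minus algebra_simps)
  also have "\<dots> \<in> m_ideal"
    by (intro ideal_add[OF is_ideal_m_ideal] ideal_mul_left[OF is_ideal_m_ideal]
        ideal_smul[OF is_ideal_m_ideal] gen IH)
  finally show ?case .
qed

lemma monoA_minus_eval_in_m_ideal: "monoA M - smul (eval_base M) aone \<in> m_ideal"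
proof (cases M)
  case (Pair m S)
  then show ?thesis
    using monoA_even_minus_eval_in_m_ideal[of m] monoA_odd_in_m_ideal[of S m]
    by (cases "S = {||}") (auto simp: eval_base_def)
qed

lemma minus_eval_in_m_ideal: "f - smul (lin_ext eval_base f) aone \<in> m_ideal"
proof -
  have "f - smul (lin_ext eval_base f) aone =
    (\<Sum>M\<in>Poly_Mapping.keys f. smul (Poly_Mapping.lookup f M) (monoA M - smul (eval_base M) aone))"
  proof (rule poly_mapping_eqI)
    fix k
    have "(\<Sum>M\<in>Poly_Mapping.keys f. Poly_Mapping.lookup f M * Poly_Mapping.lookup (monoA M) k) =
          (\<Sum>M\<in>Poly_Mapping.keys f. if M = k then Poly_Mapping.lookup f M else 0)"
      by (rule sum.cong) (auto simp: monoA_def lookup_single)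
    then have "Poly_Mapping.lookup f k =
        (\<Sum>M\<in>Poly_Mapping.keys f. Poly_Mapping.lookup f M * Poly_Mapping.lookup (monoA M) k)"
      by (simp add: in_keys_iff)
    then show "Poly_Mapping.lookup (f - smul (lin_ext eval_base f) aone) k =
      Poly_Mapping.lookup (\<Sum>M\<in>Poly_Mapping.keys f. smul (Poly_Mapping.lookup f M) (monoA M - smul (eval_base M) aone)) k"
      by (simp add: lookup_minus lookup_sum lin_ext_def algebra_simps sum_subtractf sum_distrib_right)
         (simp add: sum_distrib_left mult_ac)
  qed
  also have "\<dots> \<in> m_ideal"
    by (intro ideal_sum[OF is_ideal_m_ideal] ideal_smul[OF is_ideal_m_ideal] monoA_minus_eval_in_m_ideal)
  finally show ?thesis .
qed

lemma ideal_plus_m_ideal_eq_UNIV: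
  assumes I: "is_ideal I" and h: "h \<in> I" "lin_ext eval_base h \<noteq> 0"
  shows "{f + g | f g. f \<in> I \<and> g \<in> m_ideal} = UNIV"
proof -
  define h1 where "h1 = smul (1 / lin_ext eval_base h) h"
  have h1_I: "h1 \<in> I"
    unfolding h1_def by (rule ideal_smul[OF I h(1)])
  have h1_m: "aone - h1 \<in> m_ideal"
    using ideal_uminus[OF is_ideal_m_ideal minus_eval_in_m_ideal[of h1]] h(2) by (simp add: h1_def)
  have "z \<in> {f + g | f g. f \<in> I \<and> g \<in> m_ideal}" for z
  proof -
    have "z = amul z h1 + amul z (aone - h1)"
      by (simp add: amul_diff_right)
    moreover have "amul z h1 \<in> I"
      using ideal_mul_left[OF I h1_I] .
    moreover have "amul z (aone - h1) \<in> m_ideal"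
      using ideal_mul_left[OF is_ideal_m_ideal h1_m] .
    ultimately show ?thesis
      by blast
  qed
  then show ?thesis
    by blast
qed

section \<open>Derivatives at the base point\<close>

definition falling_fact :: "nat \<Rightarrow> nat \<Rightarrow> nat" where
  "falling_fact n a = (\<Prod>i<a. n - i)"

lemma falling_fact_0 [simp]: "falling_fact n 0 = 1"
  by (simp add: falling_fact_def)

lemma falling_fact_Suc: "falling_fact n (Suc a) = falling_fact n a * (n - a)"
  by (simp add: falling_fact_def)

lemma falling_fact_Suc_Suc: "falling_fact (Suc n) (Suc a) = Suc n * falling_fact n a"
  unfolding falling_fact_def by (subst prod.lessThan_Suc_shift) simp

lemma falling_fact_eq_0: "n < a \<Longrightarrow> falling_fact n a = 0"
  unfolding falling_fact_def by (rule prod_zero) auto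

lemma falling_fact_self_nonzero: "falling_fact n n \<noteq> 0"
  unfolding falling_fact_def by auto

lemma falling_fact_pascal: "falling_fact (Suc n) a = falling_fact n a + a * falling_fact n (a - 1)"
proof (cases a)
  case (Suc b)
  show ?thesis
  proof (cases "b \<le> n")
    case True
    have "falling_fact (Suc n) a = Suc n * falling_fact n b"
      by (simp add: Suc falling_fact_Suc_Suc)
    also have "\<dots> = falling_fact n b * (n - b) + Suc b * falling_fact n b"
      using True by (simp add: algebra_simps)
    finally show ?thesis
      by (simp add: Suc falling_fact_Suc)
  next
    case False
    then show ?thesis
      by (simp add: Suc falling_fact_Suc_Suc falling_fact_eq_0 falling_fact_Suc)
  qed
qed simp

text \<open>The value of \<open>(\<partial>/\<partial>x\<^sub>v)\<^sup>a x\<^sub>v\<^sup>n\<close> at the base point, where \<open>x\<^sub>v\<close> is 1 on the diagonal and 0 off it.\<close>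

definition xpow_deriv :: "idx \<Rightarrow> nat \<Rightarrow> nat \<Rightarrow> complex" where
  "xpow_deriv v a n =
     (if fst v = snd v then of_nat (falling_fact n a) else if a = n then of_nat (fact n) else 0)"

lemma xpow_deriv_pascal:
  "xpow_deriv v a (Suc n) = (if fst v = snd v then xpow_deriv v a n else 0) + of_nat a * xpow_deriv v (a - 1) n"
  unfolding xpow_deriv_def
  by (cases "fst v = snd v") (auto simp: falling_fact_pascal, cases a, auto simp: algebra_simps)

lemma xpow_deriv_shift: "of_nat n * xpow_deriv v a (n - 1) = xpow_deriv v (Suc a) n"
proof (cases n)
  case 0
  then show ?thesis
    by (simp add: xpow_deriv_def falling_fact_Suc)
next
  case (Suc k)
  then show ?thesis
    by (simp add: xpow_deriv_def falling_fact_Suc_Suc fact_Suc algebra_simps)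
qed

lemma xpow_deriv_nonzero_imp_le: "xpow_deriv v a n \<noteq> 0 \<Longrightarrow> a \<le> n"
  unfolding xpow_deriv_def using falling_fact_eq_0[of n a]
  by (cases "fst v = snd v"; cases "a \<le> n") (auto split: if_splits)

lemma xpow_deriv_self_nonzero: "xpow_deriv v n n \<noteq> 0"
  unfolding xpow_deriv_def using falling_fact_self_nonzero by auto

definition mono_deriv :: "(idx \<Rightarrow>\<^sub>0 nat) \<Rightarrow> (idx \<Rightarrow>\<^sub>0 nat) \<Rightarrow> complex" where
  "mono_deriv al m = (\<Prod>v\<in>Poly_Mapping.keys al \<union> Poly_Mapping.keys m.
     xpow_deriv v (Poly_Mapping.lookup al v) (Poly_Mapping.lookup m v))"

lemma mono_deriv_superset:
  "finite K \<Longrightarrow> Poly_Mapping.keys al \<union> Poly_Mapping.keys m \<subseteq> K \<Longrightarrow>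
   mono_deriv al m = (\<Prod>v\<in>K. xpow_deriv v (Poly_Mapping.lookup al v) (Poly_Mapping.lookup m v))"
  unfolding mono_deriv_def
  by (rule prod.mono_neutral_left) (auto simp: in_keys_iff xpow_deriv_def)

lemma mono_deriv_split:
  assumes "finite K" "Poly_Mapping.keys al \<union> Poly_Mapping.keys m \<subseteq> K" "w \<in> K"
  shows "mono_deriv al m = xpow_deriv w (Poly_Mapping.lookup al w) (Poly_Mapping.lookup m w) *
     (\<Prod>v\<in>K - {w}. xpow_deriv v (Poly_Mapping.lookup al v) (Poly_Mapping.lookup m v))"
  using mono_deriv_superset[OF assms(1,2)] prod.remove[OF assms(1,3)] by simp

lemma mono_deriv_pascal:
  "mono_deriv al (m + unit_exp w) =
     (if fst w = snd w then mono_deriv al m else 0)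
     + of_nat (Poly_Mapping.lookup al w) * mono_deriv (al - unit_exp w) m"
proof -
  define K where "K = insert w (Poly_Mapping.keys al \<union> Poly_Mapping.keys m)"
  have K: "finite K" "w \<in> K"
    "Poly_Mapping.keys al \<union> Poly_Mapping.keys (m + unit_exp w) \<subseteq> K"
    "Poly_Mapping.keys al \<union> Poly_Mapping.keys m \<subseteq> K"
    "Poly_Mapping.keys (al - unit_exp w) \<union> Poly_Mapping.keys m \<subseteq> K"
    unfolding K_def using keys_add[of m "unit_exp w"]
    by (auto simp: in_keys_iff lookup_minus)
  define R where "R = (\<Prod>v\<in>K - {w}. xpow_deriv v (Poly_Mapping.lookup al v) (Poly_Mapping.lookup m v))"
  have "(\<Prod>v\<in>K - {w}. xpow_deriv v (Poly_Mapping.lookup al v) (Poly_Mapping.lookup (m + unit_exp w) v)) = R"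
    unfolding R_def by (rule prod.cong) (auto simp: lookup_add lookup_unit_exp)
  moreover have "(\<Prod>v\<in>K - {w}. xpow_deriv v (Poly_Mapping.lookup (al - unit_exp w) v) (Poly_Mapping.lookup m v)) = R"
    unfolding R_def by (rule prod.cong) (auto simp: lookup_minus lookup_unit_exp)
  ultimately show ?thesis
    unfolding mono_deriv_split[OF K(1,3,2)] mono_deriv_split[OF K(1,4,2)] mono_deriv_split[OF K(1,5,2)]
      R_def[symmetric]
    by (simp add: lookup_add lookup_minus lookup_unit_exp xpow_deriv_pascal algebra_simps)
qed

lemma mono_deriv_shift:
  "of_nat (Poly_Mapping.lookup m w) * mono_deriv al (m - unit_exp w) = mono_deriv (al + unit_exp w) m"
proof -
  define K where "K = insert w (Poly_Mapping.keys al \<union> Poly_Mapping.keys m)"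
  have K: "finite K" "w \<in> K"
    "Poly_Mapping.keys al \<union> Poly_Mapping.keys (m - unit_exp w) \<subseteq> K"
    "Poly_Mapping.keys (al + unit_exp w) \<union> Poly_Mapping.keys m \<subseteq> K"
    unfolding K_def using keys_add[of al "unit_exp w"]
    by (auto simp: in_keys_iff lookup_minus)
  define R where "R = (\<Prod>v\<in>K - {w}. xpow_deriv v (Poly_Mapping.lookup al v) (Poly_Mapping.lookup m v))"
  have "(\<Prod>v\<in>K - {w}. xpow_deriv v (Poly_Mapping.lookup al v) (Poly_Mapping.lookup (m - unit_exp w) v)) = R"
    unfolding R_def by (rule prod.cong) (auto simp: lookup_minus lookup_unit_exp)
  moreover have "(\<Prod>v\<in>K - {w}. xpow_deriv v (Poly_Mapping.lookup (al + unit_exp w) v) (Poly_Mapping.lookup m v)) = R"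
    unfolding R_def by (rule prod.cong) (auto simp: lookup_add lookup_unit_exp)
  ultimately show ?thesis
    unfolding mono_deriv_split[OF K(1,3,2)] mono_deriv_split[OF K(1,4,2)]
    by (simp add: lookup_add lookup_minus lookup_unit_exp xpow_deriv_shift[symmetric] algebra_simps)
qed

lemma mono_deriv_nonzero_imp_le:
  assumes "mono_deriv al m \<noteq> 0"
  shows "Poly_Mapping.lookup al v \<le> Poly_Mapping.lookup m v"
proof -
  define K where "K = insert v (Poly_Mapping.keys al \<union> Poly_Mapping.keys m)"
  have K: "finite K" "Poly_Mapping.keys al \<union> Poly_Mapping.keys m \<subseteq> K" "v \<in> K"
    unfolding K_def by auto
  from assms have "xpow_deriv v (Poly_Mapping.lookup al v) (Poly_Mapping.lookup m v) \<noteq> 0"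
    unfolding mono_deriv_split[OF K] by auto
  then show ?thesis
    by (rule xpow_deriv_nonzero_imp_le)
qed

lemma mono_deriv_self_nonzero: "mono_deriv m m \<noteq> 0"
  unfolding mono_deriv_def by (simp add: xpow_deriv_self_nonzero)

text \<open>Up to sign, \<open>lin_ext (deriv_base (al, T))\<close> is the functional
  \<open>f \<mapsto> (\<partial>\<^sub>x\<^sup>a\<^sup>l \<partial>\<^sub>y\<^sup>T f)\<close> evaluated at the base point.\<close>

definition deriv_base :: "mono \<Rightarrow> mono \<Rightarrow> complex" where
  "deriv_base B M = (if snd M = snd B then mono_deriv (fst B) (fst M) else 0)"

lemma deriv_base_simp: "deriv_base (al, T) (m, S) = (if S = T then mono_deriv al m else 0)"
  by (simp add: deriv_base_def)

lemma deriv_base_zero: "deriv_base (0, {||}) = eval_base"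
proof
  fix M :: mono
  have "mono_deriv 0 m = (\<Prod>v\<in>Poly_Mapping.keys m. if fst v = snd v then 1 else 0)" for m
    unfolding mono_deriv_def by (auto intro!: prod.cong simp: xpow_deriv_def falling_fact_def in_keys_iff)
  then show "deriv_base (0, {||}) M = eval_base M"
    by (auto simp: deriv_base_def eval_base_def prod_zero_iff)
qed

lemma eq_if_le_total_deg:
  assumes le: "\<And>v. Poly_Mapping.lookup a v \<le> Poly_Mapping.lookup b v" and deg: "total_deg b \<le> total_deg a"
  shows "a = b"
proof -
  define K where "K = Poly_Mapping.keys a \<union> Poly_Mapping.keys b"
  have K: "finite K" "Poly_Mapping.keys a \<subseteq> K" "Poly_Mapping.keys b \<subseteq> K"
    unfolding K_def by auto
  have "(\<Sum>v\<in>K. Poly_Mapping.lookup b v - Poly_Mapping.lookup a v) = total_deg b - total_deg a"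
    unfolding total_deg_superset[OF K(1,2)] total_deg_superset[OF K(1,3)]
    using le by (rule sum_subtractf_nat)
  then have diff: "\<forall>v\<in>K. Poly_Mapping.lookup b v - Poly_Mapping.lookup a v = 0"
    using deg K(1) by simp
  show ?thesis
  proof (rule poly_mapping_eqI)
    fix v
    show "Poly_Mapping.lookup a v = Poly_Mapping.lookup b v"
    proof (cases "v \<in> K")
      case True
      then show ?thesis
        using diff le[of v] by force
    next
      case False
      then have "v \<notin> Poly_Mapping.keys a" "v \<notin> Poly_Mapping.keys b"
        using K by auto
      then show ?thesis
        by (simp add: in_keys_iff)
    qed
  qed
qed

text \<open>Triangularity: a monomial of maximal \<open>x\<close>-degree in \<open>h\<close> is seen by its own functional
  and by no other monomial of \<open>h\<close>.\<close>

lemma ex_deriv_base_nonzero: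
  assumes "h \<noteq> 0"
  shows "\<exists>B. lin_ext (deriv_base B) h \<noteq> 0"
proof -
  let ?D = "(\<lambda>M. total_deg (fst M)) ` Poly_Mapping.keys h"
  have "Max ?D \<in> ?D"
    using assms by (intro Max_in) auto
  then obtain M0 where M0: "M0 \<in> Poly_Mapping.keys h" "total_deg (fst M0) = Max ?D"
    by auto
  have others: "Poly_Mapping.lookup h M * deriv_base M0 M = 0" if "M \<in> Poly_Mapping.keys h - {M0}" for M
  proof (rule ccontr)
    assume "Poly_Mapping.lookup h M * deriv_base M0 M \<noteq> 0"
    then have "snd M = snd M0" and nz: "mono_deriv (fst M0) (fst M) \<noteq> 0"
      by (auto simp: deriv_base_def split: if_splits)
    moreover have "fst M0 = fst M"
      using mono_deriv_nonzero_imp_le[OF nz] M0 that by (intro eq_if_le_total_deg) auto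
    ultimately show False
      using that by (simp add: prod_eq_iff)
  qed
  have "(\<Sum>M\<in>Poly_Mapping.keys h - {M0}. Poly_Mapping.lookup h M * deriv_base M0 M) = 0"
    using others by (rule sum.neutral[OF ballI])
  then have "lin_ext (deriv_base M0) h = Poly_Mapping.lookup h M0 * deriv_base M0 M0"
    unfolding lin_ext_def
    using sum.remove[OF finite_keys M0(1), of "\<lambda>M. Poly_Mapping.lookup h M * deriv_base M0 M"] by simp
  moreover have "Poly_Mapping.lookup h M0 * deriv_base M0 M0 \<noteq> 0"
    using M0(1) mono_deriv_self_nonzero by (simp add: deriv_base_def in_keys_iff)
  ultimately have "lin_ext (deriv_base M0) h \<noteq> 0"
    by simp
  then show ?thesis
    by (rule exI)
qed

section \<open>Elementary elements of q x q\<close>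

lemma U_to_A_single_index:
  assumes "\<And>ij. ij \<noteq> p \<Longrightarrow> t (False, fst ij, False, snd ij) = 0 \<and> t (False, fst ij, True, snd ij) = 0"
  shows "U_to_A zeta t = smul (t (False, fst p, False, snd p) / (1 + zeta)) (xvar p)
                        + smul (t (False, fst p, True, snd p) / (1 + zeta)) (yvar p)"
proof -
  define c where "c = (\<lambda>(i, j). t (False, i, False, j) / (1 + zeta))"
  define d where "d = (\<lambda>(i, j). t (False, i, True, j) / (1 + zeta))"
  have "{ij. c ij \<noteq> 0 \<or> d ij \<noteq> 0} \<subseteq> {p}"
    using assms unfolding c_def d_def by fastforce
  then have "(\<Sum>ij \<in> {ij. c ij \<noteq> 0 \<or> d ij \<noteq> 0}. smul (c ij) (xvar ij) + smul (d ij) (yvar ij))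
       = (\<Sum>ij \<in> {p}. smul (c ij) (xvar ij) + smul (d ij) (yvar ij))"
    by (intro sum.mono_neutral_left) auto
  then show ?thesis
    unfolding U_to_A_def c_def d_def Let_def by (simp add: split_def)
qed

lemma matq_simp:
  "matq (a, b) (R, i) (P, k) =
     (if R = P then Poly_Mapping.lookup a (i, k)
      else if P then Poly_Mapping.lookup b (i, k) else - Poly_Mapping.lookup b (i, k))"
  by (simp add: matq_def)

lemma tcoef_simp:
  "tcoef p X Y (P, k, Q, l) (R, i, S, j) =
     (if S = Q \<and> j = l then matq X (R, i) (P, k) else 0) +
     (if R = P \<and> i = k then (if p \<and> P then -1 else 1) * matq Y (S, j) (Q, l) else 0)"
  by (simp add: tcoef_def)

lemma one_plus_minus_zeta_nonzero:
  assumes "zeta ^ 2 = (-1::complex)"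
  shows "1 + zeta \<noteq> 0" "1 - zeta \<noteq> 0"
  using assms by (auto simp: add_eq_0_iff)

definition row_shift_x :: "nat \<Rightarrow> nat \<Rightarrow> idx \<Rightarrow> A" where
  "row_shift_x k l v = (if fst v = k then xvar (l, snd v) else 0)"

definition row_shift_y :: "nat \<Rightarrow> nat \<Rightarrow> idx \<Rightarrow> A" where
  "row_shift_y k l v = (if fst v = k then yvar (l, snd v) else 0)"

definition row_swap_x :: "complex \<Rightarrow> nat \<Rightarrow> nat \<Rightarrow> idx \<Rightarrow> A" where
  "row_swap_x c k l v = (if fst v = k then smul c (yvar (l, snd v)) else 0)"

definition row_swap_y :: "complex \<Rightarrow> nat \<Rightarrow> nat \<Rightarrow> idx \<Rightarrow> A" where
  "row_swap_y c k l v = (if fst v = k then smul c (xvar (l, snd v)) else 0)"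

lemma act_hom_zero: "act_hom zeta p (0, 0) (0, 0) f = 0"
proof -
  have vanish: "vimg zeta p (0, 0) (0, 0) kl t = 0 \<and> wimg zeta p (0, 0) (0, 0) kl t = 0" for kl t
    by (cases kl, cases t) (simp add: vimg_def wimg_def tcoef_simp matq_simp)
  have "vimg zeta p (0, 0) (0, 0) kl = (\<lambda>_. 0)" "wimg zeta p (0, 0) (0, 0) kl = (\<lambda>_. 0)" for kl
    using vanish[of kl] by (auto intro!: ext simp del: split_paired_All)
  then show ?thesis
    unfolding act_hom_def by (simp add: U_to_A_def der_def der_mono_def split_def Let_def)
qed

lemma act_even_elementary:
  assumes "zeta ^ 2 = -1"
  shows "act zeta ((Poly_Mapping.single (l, k) 1, 0), (0, 0)) f = der False (row_shift_x k l) (row_shift_y k l) f"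
proof -
  have nz: "1 + zeta \<noteq> 0"
    using one_plus_minus_zeta_nonzero[OF assms] by simp
  have gx: "U_to_A zeta (vimg zeta False (Poly_Mapping.single (l, k) 1, 0) (0, 0) kl) = row_shift_x k l kl" for kl
  proof (cases kl)
    case (Pair k' l')
    show ?thesis
      unfolding Pair
      by (subst U_to_A_single_index[where p = "(l, l')"])
         (auto simp: vimg_def tcoef_simp matq_simp lookup_single when_def row_shift_x_def nz)
  qed
  have gy: "U_to_A zeta (wimg zeta False (Poly_Mapping.single (l, k) 1, 0) (0, 0) kl) = row_shift_y k l kl" for kl
  proof (cases kl)
    case (Pair k' l')
    show ?thesis
      unfolding Pair
      by (subst U_to_A_single_index[where p = "(l, l')"])
         (auto simp: wimg_def tcoef_simp matq_simp lookup_single when_def row_shift_y_def nz)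
  qed
  show ?thesis
    unfolding act_def by (simp add: act_hom_zero, simp add: act_hom_def gx gy)
qed

lemma act_odd_elementary:
  assumes "zeta ^ 2 = -1"
  defines "c \<equiv> (1 - zeta) / (1 + zeta)"
  shows "act zeta ((0, Poly_Mapping.single (l, k) 1), (0, 0)) f = der True (row_swap_x c k l) (row_swap_y c k l) f"
proof -
  have nz: "1 + zeta \<noteq> 0"
    using one_plus_minus_zeta_nonzero[OF assms(1)] by simp
  have gx: "U_to_A zeta (vimg zeta True (0, Poly_Mapping.single (l, k) 1) (0, 0) kl) = row_swap_x c k l kl" for kl
  proof (cases kl)
    case (Pair k' l')
    show ?thesis
      unfolding Pair
      by (subst U_to_A_single_index[where p = "(l, l')"])
         (auto simp: vimg_def tcoef_simp matq_simp lookup_single when_def row_swap_x_def nz c_def)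
  qed
  have gy: "U_to_A zeta (wimg zeta True (0, Poly_Mapping.single (l, k) 1) (0, 0) kl) = row_swap_y c k l kl" for kl
  proof (cases kl)
    case (Pair k' l')
    show ?thesis
      unfolding Pair
      by (subst U_to_A_single_index[where p = "(l, l')"])
         (auto simp: wimg_def tcoef_simp matq_simp lookup_single when_def row_swap_y_def nz c_def)
  qed
  show ?thesis
    unfolding act_def by (simp add: act_hom_zero, simp add: act_hom_def gx gy)
qed

lemma lin_ext_der: "lin_ext w (der p gx gy f) = lin_ext (\<lambda>M. lin_ext w (der_mono p gx gy M)) f"
  unfolding der_def lin_ext_sum lin_ext_smul by (simp add: lin_ext_def)

definition der_mono_x :: "(idx \<Rightarrow> A) \<Rightarrow> mono \<Rightarrow> A" where
  "der_mono_x gx M = (\<Sum>v\<in>Poly_Mapping.keys (fst M). smul (of_nat (Poly_Mapping.lookup (fst M) v))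
     (amul (monoA (fst M - unit_exp v, {||})) (amul (gx v) (monoA (0, snd M)))))"

definition der_mono_y :: "bool \<Rightarrow> (idx \<Rightarrow> A) \<Rightarrow> mono \<Rightarrow> A" where
  "der_mono_y p gy M = (let s = sorted_list_of_fset (snd M) in
     (\<Sum>i<length s. smul (if p then (-1) ^ i else 1)
       (amul (monoA (fst M, fset_of_list (take i s)))
             (amul (gy (s ! i)) (monoA (0, fset_of_list (drop (Suc i) s)))))))"

lemma der_mono_split: "der_mono p gx gy M = der_mono_x gx M + der_mono_y p gy M"
  by (simp add: der_mono_def der_mono_x_def der_mono_y_def unit_exp_def split_def Let_def)

lemma finite_row: "finite K \<Longrightarrow> finite {j. (i, j) \<in> K}"
  by (rule finite_subset[of _ "snd ` K"]) force+

lemma sum_row_reindex: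
  assumes "finite K" "finite J" "{j. (k, j) \<in> K} \<subseteq> J"
  shows "(\<Sum>v\<in>K. if fst v = k then f (snd v) else 0) = (\<Sum>j\<in>J. if (k, j) \<in> K then f j else 0)"
proof -
  have "(\<Sum>v\<in>K. if fst v = k then f (snd v) else 0) = (\<Sum>v\<in>{v\<in>K. fst v = k}. f (snd v))"
    using assms(1) by (simp add: sum.inter_filter)
  also have "{v\<in>K. fst v = k} = Pair k ` {j. (k, j) \<in> K}"
    by force
  also have "(\<Sum>v\<in>Pair k ` {j. (k, j) \<in> K}. f (snd v)) = (\<Sum>j\<in>{j\<in>J. (k, j) \<in> K}. f j)"
    using assms(3) by (subst sum.reindex) (auto intro!: sum.cong simp: inj_on_def)
  also have "\<dots> = (\<Sum>j\<in>J. if (k, j) \<in> K then f j else 0)"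
    using assms(2) by (simp add: sum.inter_filter)
  finally show ?thesis .
qed

lemma mono_deriv_row_move:
  "of_nat (Poly_Mapping.lookup m (k, j)) * mono_deriv al (m - unit_exp (k, j) + unit_exp (l, j)) =
     (if j = l then mono_deriv (al + unit_exp (k, j)) m else 0)
     + of_nat (Poly_Mapping.lookup al (l, j)) * mono_deriv (al - unit_exp (l, j) + unit_exp (k, j)) m"
  unfolding mono_deriv_pascal
  by (simp add: distrib_left mono_deriv_shift mult.left_commute[of "of_nat (Poly_Mapping.lookup m (k, j))"])

lemma lin_ext_der_mono_y_shift: "lin_ext (deriv_base (al, {||})) (der_mono_y p (row_shift_y k l) M) = 0"
proof -
  have "lin_ext (deriv_base (al, {||})) (amul (monoA (m, A)) (amul (row_shift_y k l v) (monoA (0, B)))) = 0"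
    for m A v B
    by (cases "fst v = k") (simp_all add: row_shift_y_def yvar_def monoA_def amul_single_pair deriv_base_def)
  then show ?thesis
    by (simp add: der_mono_y_def Let_def lin_ext_sum)
qed

lemma lin_ext_der_mono_x_shift:
  "lin_ext (deriv_base (al, {||})) (der_mono_x (row_shift_x k l) M) =
     deriv_base (al + unit_exp (k, l), {||}) M
     + (\<Sum>j | (l, j) \<in> Poly_Mapping.keys al.
          of_nat (Poly_Mapping.lookup al (l, j)) * deriv_base (al - unit_exp (l, j) + unit_exp (k, j), {||}) M)"
proof (cases M)
  case (Pair m S)
  have summand: "of_nat (Poly_Mapping.lookup m v) * lin_ext (deriv_base (al, {||}))
      (amul (monoA (m - unit_exp v, {||})) (amul (row_shift_x k l v) (monoA (0, S)))) =
    (if S = {||} \<and> fst v = k then of_nat (Poly_Mapping.lookup m (k, snd v)) *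
       mono_deriv al (m - unit_exp (k, snd v) + unit_exp (l, snd v)) else 0)" for v
    by (cases v) (simp add: row_shift_x_def xvar_unit_exp monoA_def amul_single_pair deriv_base_simp)
  show ?thesis
  proof (cases "S = {||}")
    case False
    then have "lin_ext (deriv_base (al, {||})) (der_mono_x (row_shift_x k l) M) = 0"
      by (simp add: Pair der_mono_x_def lin_ext_sum summand)
    then show ?thesis
      using False by (simp add: Pair deriv_base_simp)
  next
    case True
    let ?J = "insert l ({j. (k, j) \<in> Poly_Mapping.keys m} \<union> {j. (l, j) \<in> Poly_Mapping.keys al})"
    have J: "finite ?J"
      by (simp add: finite_row)
    have "lin_ext (deriv_base (al, {||})) (der_mono_x (row_shift_x k l) M) =
        (\<Sum>v\<in>Poly_Mapping.keys m. if fst v = k then of_nat (Poly_Mapping.lookup m (k, snd v)) *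
          mono_deriv al (m - unit_exp (k, snd v) + unit_exp (l, snd v)) else 0)"
      unfolding Pair der_mono_x_def fst_conv snd_conv lin_ext_sum lin_ext_smul summand using True by simp
    also have "\<dots> = (\<Sum>j\<in>?J. of_nat (Poly_Mapping.lookup m (k, j)) *
        mono_deriv al (m - unit_exp (k, j) + unit_exp (l, j)))"
      using J by (subst sum_row_reindex[where J = ?J]) (auto intro!: sum.cong simp: in_keys_iff)
    also have "\<dots> = (\<Sum>j\<in>?J. if j = l then mono_deriv (al + unit_exp (k, j)) m else 0)
        + (\<Sum>j\<in>?J. of_nat (Poly_Mapping.lookup al (l, j)) * mono_deriv (al - unit_exp (l, j) + unit_exp (k, j)) m)"
      by (simp only: mono_deriv_row_move sum.distrib)
    also have "(\<Sum>j\<in>?J. if j = l then mono_deriv (al + unit_exp (k, j)) m else 0) = mono_deriv (al + unit_exp (k, l)) m"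
      using J by simp
    also have "(\<Sum>j\<in>?J. of_nat (Poly_Mapping.lookup al (l, j)) * mono_deriv (al - unit_exp (l, j) + unit_exp (k, j)) m)
        = (\<Sum>j | (l, j) \<in> Poly_Mapping.keys al. of_nat (Poly_Mapping.lookup al (l, j)) * mono_deriv (al - unit_exp (l, j) + unit_exp (k, j)) m)"
      using J by (intro sum.mono_neutral_right) (auto simp: in_keys_iff)
    finally show ?thesis
      using True by (simp add: Pair deriv_base_simp)
  qed
qed

lemma sorted_list_of_fset_nth_split:
  fixes S :: "idx fset"
  defines "s \<equiv> sorted_list_of_fset S"
  assumes i: "i < length s"
  shows "s ! i |\<in>| S"
    and "fset_of_list (take i s) |\<union>| fset_of_list (drop (Suc i) s) = S |-| {|s ! i|}"
    and "fset_of_list (take i s) |\<inter>| fset_of_list (drop (Suc i) s) = {||}"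
proof -
  have set_s: "set s = fset S"
    by (simp add: s_def)
  have "distinct s"
    by (simp add: s_def sorted_list_of_fset.rep_eq)
  then have "distinct (take i s @ s ! i # drop (Suc i) s)"
    by (metis id_take_nth_drop[OF i])
  then have "s ! i \<notin> set (take i s)" "s ! i \<notin> set (drop (Suc i) s)"
    and disj: "set (take i s) \<inter> set (drop (Suc i) s) = {}"
    by auto
  moreover have "set s = set (take i s) \<union> {s ! i} \<union> set (drop (Suc i) s)"
    by (subst id_take_nth_drop[OF i]) auto
  ultimately show "s ! i |\<in>| S"
    and "fset_of_list (take i s) |\<union>| fset_of_list (drop (Suc i) s) = S |-| {|s ! i|}"
    and "fset_of_list (take i s) |\<inter>| fset_of_list (drop (Suc i) s) = {||}"
    using set_s by (auto simp: fset_of_list_elem)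
qed

text \<open>The sign with which \<open>y\<^sub>t\<close> is extracted from \<open>y\<^sup>S\<close> by the odd part of \<open>der_mono\<close>.\<close>

definition odd_pull_sign :: "idx fset \<Rightarrow> idx \<Rightarrow> complex" where
  "odd_pull_sign S t = (let s = sorted_list_of_fset S in
     \<Sum>i<length s. if s ! i = t then (-1) ^ i * odd_sign (fset_of_list (take i s)) (fset_of_list (drop (Suc i) s)) else 0)"

lemma odd_pull_sign_nonzero:
  assumes "t |\<in>| S"
  shows "odd_pull_sign S t \<noteq> 0"
proof -
  define s where "s = sorted_list_of_fset S"
  have "t \<in> set s"
    using assms by (simp add: s_def)
  then obtain i where i: "i < length s" "s ! i = t"
    by (auto simp: in_set_conv_nth)
  have "distinct s"
    by (simp add: s_def sorted_list_of_fset.rep_eq)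
  then have "s ! j = t \<longleftrightarrow> j = i" if "j < length s" for j
    using i that by (auto simp: nth_eq_iff_index_eq)
  then have "odd_pull_sign S t =
      (\<Sum>j<length s. if j = i then (-1) ^ j * odd_sign (fset_of_list (take j s)) (fset_of_list (drop (Suc j) s)) else 0)"
    unfolding odd_pull_sign_def Let_def s_def[symmetric] by (intro sum.cong) auto
  also have "\<dots> = (-1) ^ i * odd_sign (fset_of_list (take i s)) (fset_of_list (drop (Suc i) s))"
    using i by simp
  finally show ?thesis
    using sorted_list_of_fset_nth_split(3)[of i S] i by (simp add: s_def odd_sign_def)
qed

lemma sum_sorted_list_of_fset_odd_sign:
  "(let s = sorted_list_of_fset S in
     \<Sum>i<length s. (-1) ^ i * odd_sign (fset_of_list (take i s)) (fset_of_list (drop (Suc i) s)) * F (s ! i))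
   = (\<Sum>t\<in>fset S. odd_pull_sign S t * F t)"
proof -
  define s where "s = sorted_list_of_fset S"
  define g where "g i = (-1) ^ i * odd_sign (fset_of_list (take i s)) (fset_of_list (drop (Suc i) s))" for i
  have "(\<Sum>t\<in>fset S. odd_pull_sign S t * F t) = (\<Sum>t\<in>fset S. \<Sum>i<length s. if s ! i = t then g i * F (s ! i) else 0)"
    unfolding odd_pull_sign_def Let_def s_def[symmetric] g_def[symmetric] sum_distrib_right
    by (intro sum.cong) auto
  also have "\<dots> = (\<Sum>i<length s. \<Sum>t\<in>fset S. if s ! i = t then g i * F (s ! i) else 0)"
    by (rule sum.swap)
  also have "\<dots> = (\<Sum>i<length s. g i * F (s ! i))"
    using sorted_list_of_fset_nth_split(1)[of _ S] by (intro sum.cong) (auto simp: s_def)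
  finally show ?thesis
    by (simp add: Let_def s_def g_def)
qed

lemma odd_push_summand_shift:
  "of_nat (Poly_Mapping.lookup m (k, j)) *
     (if finsert (l, j) S = T then odd_sign {|(l, j)|} S * mono_deriv al (m - unit_exp (k, j)) else 0) =
   (if (l, j) |\<in>| T then odd_sign {|(l, j)|} (T |-| {|(l, j)|})
      * deriv_base (al + unit_exp (k, j), T |-| {|(l, j)|}) (m, S) else 0)"
proof (cases "finsert (l, j) S = T")
  case inserted: True
  show ?thesis
  proof (cases "(l, j) |\<in>| S")
    case True
    then have "odd_sign {|(l, j)|} S = 0" "S \<noteq> T |-| {|(l, j)|}"
      by (auto simp: odd_sign_def)
    then show ?thesis
      by (simp add: deriv_base_simp)
  next
    case False
    then have "S = T |-| {|(l, j)|}"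
      using inserted by auto
    then show ?thesis
      using inserted mono_deriv_shift[of m "(k, j)" al] by (auto simp: deriv_base_simp)
  qed
next
  case False
  then show ?thesis
    by (auto simp: deriv_base_simp)
qed

lemma lin_ext_der_mono_x_swap:
  "lin_ext (deriv_base (al, T)) (der_mono_x (row_swap_x c k l) M) =
     c * (\<Sum>j | (l, j) |\<in>| T.
       odd_sign {|(l, j)|} (T |-| {|(l, j)|}) * deriv_base (al + unit_exp (k, j), T |-| {|(l, j)|}) M)"
proof (cases M)
  case (Pair m S)
  define F where "F j = (if finsert (l, j) S = T
    then odd_sign {|(l, j)|} S * mono_deriv al (m - unit_exp (k, j)) else 0)" for j
  define D where "D j = odd_sign {|(l, j)|} (T |-| {|(l, j)|})
    * deriv_base (al + unit_exp (k, j), T |-| {|(l, j)|}) (m, S)" for j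
  let ?J = "{j. (k, j) \<in> Poly_Mapping.keys m} \<union> {j. (l, j) |\<in>| T}"
  have J: "finite ?J"
    by (simp add: finite_row)
  have summand: "of_nat (Poly_Mapping.lookup m v) * lin_ext (deriv_base (al, T))
      (amul (monoA (m - unit_exp v, {||})) (amul (row_swap_x c k l v) (monoA (0, S)))) =
    (if fst v = k then c * (of_nat (Poly_Mapping.lookup m (k, snd v)) * F (snd v)) else 0)" for v
    by (cases v) (simp add: F_def row_swap_x_def yvar_def monoA_def amul_single_pair amul_smul_left deriv_base_simp)
  have "lin_ext (deriv_base (al, T)) (der_mono_x (row_swap_x c k l) M) =
      (\<Sum>v\<in>Poly_Mapping.keys m. if fst v = k then c * (of_nat (Poly_Mapping.lookup m (k, snd v)) * F (snd v)) else 0)"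
    unfolding Pair der_mono_x_def fst_conv snd_conv lin_ext_sum lin_ext_smul summand by (rule refl)
  also have "\<dots> = c * (\<Sum>j\<in>?J. of_nat (Poly_Mapping.lookup m (k, j)) * F j)"
    using J by (subst sum_row_reindex[where J = ?J]) (auto intro!: sum.cong simp: in_keys_iff sum_distrib_left)
  also have "\<dots> = c * (\<Sum>j\<in>?J. if (l, j) |\<in>| T then D j else 0)"
    unfolding F_def D_def odd_push_summand_shift ..
  also have "\<dots> = c * (\<Sum>j | (l, j) |\<in>| T. D j)"
  proof -
    have "{j \<in> ?J. (l, j) |\<in>| T} = {j. (l, j) |\<in>| T}"
      by auto
    then show ?thesis
      by (simp add: sum.inter_filter[OF J, symmetric])
  qed
  finally show ?thesis
    by (simp add: Pair D_def)
qed

lemma odd_pull_summand_pascal: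
  assumes "(k, l) |\<notin>| T"
  shows "(if (k, j) |\<in>| S \<and> S |-| {|(k, j)|} = T
          then odd_pull_sign S (k, j) * mono_deriv al (m + unit_exp (l, j)) else 0) =
    (if l = j then odd_pull_sign (finsert (k, l) T) (k, l) * deriv_base (al, finsert (k, l) T) (m, S) else 0)
    + (if (k, j) |\<notin>| T then odd_pull_sign (finsert (k, j) T) (k, j) * of_nat (Poly_Mapping.lookup al (l, j))
         * deriv_base (al - unit_exp (l, j), finsert (k, j) T) (m, S) else 0)"
proof (cases "(k, j) |\<in>| S \<and> S |-| {|(k, j)|} = T")
  case True
  then have "S = finsert (k, j) T" "(k, j) |\<notin>| T"
    by auto
  then show ?thesis
    by (auto simp: mono_deriv_pascal deriv_base_simp algebra_simps)
next
  case False
  then have "S \<noteq> finsert (k, j) T \<or> (k, j) |\<in>| T"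
    by auto
  then show ?thesis
    using False assms by (auto simp: deriv_base_simp)
qed

lemma lin_ext_der_mono_y_swap_row:
  assumes J: "finite J" "{j. (k, j) |\<in>| S} \<subseteq> J"
  shows "lin_ext (deriv_base (al, T)) (der_mono_y True (row_swap_y c k l) (m, S)) =
    c * (\<Sum>j\<in>J. if (k, j) |\<in>| S \<and> S |-| {|(k, j)|} = T
      then odd_pull_sign S (k, j) * mono_deriv al (m + unit_exp (l, j)) else 0)"
proof -
  let ?s = "sorted_list_of_fset S"
  define G where "G t = (if fst t = k \<and> S |-| {|t|} = T then mono_deriv al (m + unit_exp (l, snd t)) else 0)" for t
  have summand: "(-1) ^ i * lin_ext (deriv_base (al, T)) (amul (monoA (m, fset_of_list (take i ?s)))
      (amul (row_swap_y c k l (?s ! i)) (monoA (0, fset_of_list (drop (Suc i) ?s))))) =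
    c * ((-1) ^ i * odd_sign (fset_of_list (take i ?s)) (fset_of_list (drop (Suc i) ?s)) * G (?s ! i))"
    if "i < length ?s" for i
    using sorted_list_of_fset_nth_split(2)[OF that]
    by (cases "fst (?s ! i) = k")
       (simp_all add: G_def row_swap_y_def xvar_unit_exp monoA_def amul_single_pair amul_smul_left
        amul_smul_right deriv_base_simp)
  have "lin_ext (deriv_base (al, T)) (der_mono_y True (row_swap_y c k l) (m, S)) =
      c * (\<Sum>i<length ?s. (-1) ^ i * odd_sign (fset_of_list (take i ?s)) (fset_of_list (drop (Suc i) ?s)) * G (?s ! i))"
    unfolding der_mono_y_def fst_conv snd_conv Let_def lin_ext_sum lin_ext_smul if_True sum_distrib_left
    by (intro sum.cong refl summand) simp
  also have "(\<Sum>i<length ?s. (-1) ^ i * odd_sign (fset_of_list (take i ?s)) (fset_of_list (drop (Suc i) ?s)) * G (?s ! i))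
      = (\<Sum>t\<in>fset S. odd_pull_sign S t * G t)"
    using sum_sorted_list_of_fset_odd_sign[of S G] by (simp add: Let_def)
  also have "\<dots> = (\<Sum>t\<in>fset S. if fst t = k then odd_pull_sign S (k, snd t) * G (k, snd t) else 0)"
  proof (rule sum.cong[OF refl])
    fix t :: idx
    show "odd_pull_sign S t * G t = (if fst t = k then odd_pull_sign S (k, snd t) * G (k, snd t) else 0)"
      by (cases t) (simp add: G_def)
  qed
  also have "\<dots> = (\<Sum>j\<in>J. if (k, j) |\<in>| S \<and> S |-| {|(k, j)|} = T
      then odd_pull_sign S (k, j) * mono_deriv al (m + unit_exp (l, j)) else 0)"
    using J by (subst sum_row_reindex[where J = J]) (auto intro!: sum.cong simp: G_def)
  finally show ?thesis .
qed

lemma lin_ext_der_mono_y_swap: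
  assumes "(k, l) |\<notin>| T"
  shows "lin_ext (deriv_base (al, T)) (der_mono_y True (row_swap_y c k l) M) =
    c * odd_pull_sign (finsert (k, l) T) (k, l) * deriv_base (al, finsert (k, l) T) M
    + c * (\<Sum>j | (l, j) \<in> Poly_Mapping.keys al \<and> (k, j) |\<notin>| T.
        odd_pull_sign (finsert (k, j) T) (k, j) * of_nat (Poly_Mapping.lookup al (l, j))
        * deriv_base (al - unit_exp (l, j), finsert (k, j) T) M)"
proof (cases M)
  case (Pair m S)
  let ?J = "insert l ({j. (k, j) |\<in>| S} \<union> {j. (l, j) \<in> Poly_Mapping.keys al})"
  define E where "E j = odd_pull_sign (finsert (k, j) T) (k, j) * of_nat (Poly_Mapping.lookup al (l, j))
    * deriv_base (al - unit_exp (l, j), finsert (k, j) T) (m, S)" for j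
  have J: "finite ?J"
    by (simp add: finite_row)
  have "lin_ext (deriv_base (al, T)) (der_mono_y True (row_swap_y c k l) M) =
      c * (\<Sum>j\<in>?J. if (k, j) |\<in>| S \<and> S |-| {|(k, j)|} = T
        then odd_pull_sign S (k, j) * mono_deriv al (m + unit_exp (l, j)) else 0)"
    unfolding Pair using J by (intro lin_ext_der_mono_y_swap_row) auto
  also have "\<dots> = c * (\<Sum>j\<in>?J.
      (if l = j then odd_pull_sign (finsert (k, l) T) (k, l) * deriv_base (al, finsert (k, l) T) (m, S) else 0)
      + (if (k, j) |\<notin>| T then E j else 0))"
    unfolding odd_pull_summand_pascal[OF assms] E_def ..
  also have "(\<Sum>j\<in>?J.
      (if l = j then odd_pull_sign (finsert (k, l) T) (k, l) * deriv_base (al, finsert (k, l) T) (m, S) else 0)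
      + (if (k, j) |\<notin>| T then E j else 0)) =
    odd_pull_sign (finsert (k, l) T) (k, l) * deriv_base (al, finsert (k, l) T) (m, S)
      + (\<Sum>j | (l, j) \<in> Poly_Mapping.keys al \<and> (k, j) |\<notin>| T. E j)"
    using J by (simp add: sum.distrib sum.inter_filter[symmetric])
      (intro sum.mono_neutral_right, auto simp: E_def in_keys_iff)
  finally show ?thesis
    by (simp add: Pair E_def distrib_left mult.assoc)
qed

section \<open>Stable subspaces\<close>

definition mono_deg :: "mono \<Rightarrow> nat" where
  "mono_deg B = total_deg (fst B) + fcard (snd B)"

lemma deriv_base_vanishes_odd_step:
  assumes zeta: "zeta ^ 2 = -1" and stable: "qq_stable zeta I" and h: "h \<in> I"
    and IH: "\<And>B h'. mono_deg B < mono_deg (al, T') \<Longrightarrow> h' \<in> I \<Longrightarrow> lin_ext (deriv_base B) h' = 0"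
    and kl: "(k, l) |\<in>| T'"
  shows "lin_ext (deriv_base (al, T')) h = 0"
proof -
  define T where "T = T' |-| {|(k, l)|}"
  have T': "T' = finsert (k, l) T" and klT: "(k, l) |\<notin>| T"
    using kl by (auto simp: T_def)
  define c where "c = (1 - zeta) / (1 + zeta)"
  have "c \<noteq> 0"
    using one_plus_minus_zeta_nonzero[OF zeta] by (simp add: c_def)
  have deg: "mono_deg (al, T') = total_deg al + fcard T + 1"
    using klT by (simp add: T' mono_deg_def fcard_finsert_disjoint)
  have lower_x: "mono_deg (al + unit_exp (k, j), T |-| {|(l, j)|}) < mono_deg (al, T')"
    if "(l, j) |\<in>| T" for j
    using deg fcard_Suc_fminus1[OF that] by (simp add: mono_deg_def total_deg_add_unit_exp)
  have lower_y: "mono_deg (al - unit_exp (l, j), finsert (k, j) T) < mono_deg (al, T')"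
    if "(l, j) \<in> Poly_Mapping.keys al" "(k, j) |\<notin>| T" for j
    using deg total_deg_minus_unit_exp[OF that(1)] that(2) by (simp add: mono_deg_def fcard_finsert_disjoint)
  have "der True (row_swap_x c k l) (row_swap_y c k l) h \<in> I"
    using stable h act_odd_elementary[OF zeta, of l k h] unfolding qq_stable_def c_def by metis
  then have "0 = lin_ext (deriv_base (al, T)) (der True (row_swap_x c k l) (row_swap_y c k l) h)"
    using IH deg by (simp add: mono_deg_def)
  also have "\<dots> = c * (\<Sum>j | (l, j) |\<in>| T. odd_sign {|(l, j)|} (T |-| {|(l, j)|})
        * lin_ext (deriv_base (al + unit_exp (k, j), T |-| {|(l, j)|})) h)
      + (c * odd_pull_sign T' (k, l) * lin_ext (deriv_base (al, T')) h
      + c * (\<Sum>j | (l, j) \<in> Poly_Mapping.keys al \<and> (k, j) |\<notin>| T.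
          odd_pull_sign (finsert (k, j) T) (k, j) * of_nat (Poly_Mapping.lookup al (l, j))
          * lin_ext (deriv_base (al - unit_exp (l, j), finsert (k, j) T)) h))"
    unfolding lin_ext_der der_mono_split lin_ext_add lin_ext_der_mono_x_swap lin_ext_der_mono_y_swap[OF klT] T'
    by (simp only: lin_ext_fun_add lin_ext_fun_scale lin_ext_fun_sum)
  also have "(\<Sum>j | (l, j) |\<in>| T. odd_sign {|(l, j)|} (T |-| {|(l, j)|})
        * lin_ext (deriv_base (al + unit_exp (k, j), T |-| {|(l, j)|})) h) = 0"
    using lower_x IH h by (intro sum.neutral ballI) simp
  also have "(\<Sum>j | (l, j) \<in> Poly_Mapping.keys al \<and> (k, j) |\<notin>| T.
          odd_pull_sign (finsert (k, j) T) (k, j) * of_nat (Poly_Mapping.lookup al (l, j))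
          * lin_ext (deriv_base (al - unit_exp (l, j), finsert (k, j) T)) h) = 0"
    using lower_y IH h by (intro sum.neutral ballI) simp
  finally have "c * odd_pull_sign T' (k, l) * lin_ext (deriv_base (al, T')) h = 0"
    by simp
  then show ?thesis
    using \<open>c \<noteq> 0\<close> odd_pull_sign_nonzero[OF kl] by simp
qed

lemma deriv_base_vanishes_even_step:
  assumes zeta: "zeta ^ 2 = -1" and stable: "qq_stable zeta I" and h: "h \<in> I"
    and IH: "\<And>B h'. mono_deg B < mono_deg (al', {||}) \<Longrightarrow> h' \<in> I \<Longrightarrow> lin_ext (deriv_base B) h' = 0"
    and kl: "(k, l) \<in> Poly_Mapping.keys al'"
  shows "lin_ext (deriv_base (al', {||})) h = 0"
proof -
  define al where "al = al' - unit_exp (k, l)"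
  have al': "al' = al + unit_exp (k, l)"
    using kl by (simp add: al_def minus_unit_exp_add_cancel)
  have deg: "mono_deg (al', {||}) = total_deg al + 1"
    by (simp add: al' mono_deg_def total_deg_add_unit_exp)
  have lower: "mono_deg (al - unit_exp (l, j) + unit_exp (k, j), {||}) < mono_deg (al', {||})"
    if "(l, j) \<in> Poly_Mapping.keys al" for j
    using deg total_deg_minus_unit_exp[OF that] by (simp add: mono_deg_def total_deg_add_unit_exp)
  have "der False (row_shift_x k l) (row_shift_y k l) h \<in> I"
    using stable h act_even_elementary[OF zeta, of l k h] unfolding qq_stable_def by metis
  then have "0 = lin_ext (deriv_base (al, {||})) (der False (row_shift_x k l) (row_shift_y k l) h)"
    using IH deg by (simp add: mono_deg_def)
  also have "\<dots> = lin_ext (deriv_base (al', {||})) h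
      + (\<Sum>j | (l, j) \<in> Poly_Mapping.keys al. of_nat (Poly_Mapping.lookup al (l, j))
          * lin_ext (deriv_base (al - unit_exp (l, j) + unit_exp (k, j), {||})) h)"
    unfolding lin_ext_der der_mono_split lin_ext_add lin_ext_der_mono_x_shift lin_ext_der_mono_y_shift
      add_0_right al'
    by (simp only: lin_ext_fun_add lin_ext_fun_sum)
  also have "(\<Sum>j | (l, j) \<in> Poly_Mapping.keys al. of_nat (Poly_Mapping.lookup al (l, j))
          * lin_ext (deriv_base (al - unit_exp (l, j) + unit_exp (k, j), {||})) h) = 0"
    using lower IH h by (intro sum.neutral ballI) simp
  finally show ?thesis
    by simp
qed

lemma qq_stable_deriv_base_vanishes:
  assumes zeta: "zeta ^ 2 = -1" and stable: "qq_stable zeta I"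
    and eval: "\<forall>h\<in>I. lin_ext eval_base h = 0" and h: "h \<in> I"
  shows "lin_ext (deriv_base B) h = 0"
  using h
proof (induction "mono_deg B" arbitrary: B h rule: less_induct)
  case less
  obtain al T where B: "B = (al, T)"
    by force
  have IH: "\<And>B' h'. mono_deg B' < mono_deg (al, T) \<Longrightarrow> h' \<in> I \<Longrightarrow> lin_ext (deriv_base B') h' = 0"
    using less.hyps B by blast
  consider (odd) k l where "(k, l) |\<in>| T" | (even) k l where "T = {||}" "(k, l) \<in> Poly_Mapping.keys al"
    | (const) "T = {||}" "al = 0"
    by (metis all_not_fin_conv keys_eq_empty ex_in_conv surj_pair)
  then show ?case
  proof cases
    case odd
    then show ?thesis
      using deriv_base_vanishes_odd_step[OF zeta stable less.prems IH] B by simp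
  next
    case even
    then show ?thesis
      using deriv_base_vanishes_even_step[OF zeta stable less.prems] IH B by simp
  next
    case const
    then show ?thesis
      using eval less.prems B deriv_base_zero by simp
  qed
qed

theorem lemma4p5:
  fixes zeta :: complex and I :: "A set"
  assumes "zeta ^ 2 = -1"
    and "is_ideal I" and "qq_stable zeta I" and "I \<noteq> {0}"
  shows "{f + g | f g. f \<in> I \<and> g \<in> m_ideal} = UNIV"
proof (cases "\<exists>h\<in>I. lin_ext eval_base h \<noteq> 0")
  case True
  then show ?thesis
    using ideal_plus_m_ideal_eq_UNIV[OF assms(2)] by blast
next
  case False
  obtain h where h: "h \<in> I" "h \<noteq> 0"
    using assms(4) ideal_zero[OF assms(2)] by blast
  then obtain B where "lin_ext (deriv_base B) h \<noteq> 0"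
    using ex_deriv_base_nonzero by blast
  moreover have "lin_ext (deriv_base B) h = 0"
    using qq_stable_deriv_base_vanishes[OF assms(1,3)] False h(1) by blast
  ultimately show ?thesis
    by contradiction
qed

end
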